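(* Let $p\ge 0$ be an integer, $n=2p+1$, and define $N_p(R)=\sum_{\sigma\in X_{p+1}}W_2(\sigma,R)$ and $D_p(R)=\sum_{\sigma\in X_{p-1}}W_0(\sigma,R)$. Then (1) $N_p(R)$ is a monic polynomial of degree $\frac{(p+1)(p+2)}{2}$ all of whose coefficients (of $R^i$, $0\le i\le\frac{(p+1)(p+2)}{2}$) are positive; (2) $D_p(R)$ is a monic polynomial of degree $\frac{p(p-1)}{2}$ all of whose coefficients are positive; (3) $N_p(0)=n!\,D_p(0)$.
   Context: A Schröder path is a finite directed path in $\mathbb{Z}^2$ each of whose steps is an ascent $(x,y)\to(x+1,y+1)$, a descent $(x,y)\to(x+1,y-1)$, or a flat step $(x,y)\to(x+2,y)$ (the empty path is allowed). Let $P_i=(-i,i)$, $Q_i=(i,i)$. For $k\ge 0$, $X_k$ is the set of collections of $k+1$ pairwise vertex-disjoint Schröder paths from $\{P_i\}_{i=0}^k$ to $\{Q_i\}_{i=0}^k$; $X_{-1}$ consists only of the empty collection. $W_0(\sigma,R)$ is the product over all steps of $\sigma$ of: $1$ per ascent, $R$ per flat step, $y+1$ per descent starting at height $y$. $W_2(\sigma,R)$ is the same but with $y-1$ per descent starting at height $y$. Empty products are $1$. *)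

theory Defs
  imports Main "HOL-Computational_Algebra.Polynomial"
begin

datatype step = Asc | Desc | Flat

fun step_move :: "int \<times> int \<Rightarrow> step \<Rightarrow> int \<times> int" where
  "step_move (x, y) Asc = (x + 1, y + 1)"
| "step_move (x, y) Desc = (x + 1, y - 1)"
| "step_move (x, y) Flat = (x + 2, y)"

fun path_vertices :: "int \<times> int \<Rightarrow> step list \<Rightarrow> (int \<times> int) set" where
  "path_vertices a [] = {a}"
| "path_vertices a (s # ss) = insert a (path_vertices (step_move a s) ss)"

fun path_end :: "int \<times> int \<Rightarrow> step list \<Rightarrow> int \<times> int" where
  "path_end a [] = a"
| "path_end a (s # ss) = path_end (step_move a s) ss"

definition P :: "nat \<Rightarrow> int \<times> int" where "P i = (- int i, int i)"
definition Q :: "nat \<Rightarrow> int \<times> int" where "Q i = (int i, int i)"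

text \<open>Thus X_k = families (k+1),
  and families 0 = {the empty collection} = X_(-1).\<close>
definition families :: "nat \<Rightarrow> (nat \<Rightarrow> step list) set" where
  "families m = {f. (\<forall>i\<ge>m. f i = [])
     \<and> (\<forall>i<m. \<exists>j<m. path_end (P i) (f i) = Q j)
     \<and> (\<forall>i<m. \<forall>j<m. i \<noteq> j \<longrightarrow> path_end (P i) (f i) \<noteq> path_end (P j) (f j))
     \<and> (\<forall>i<m. \<forall>j<m. i \<noteq> j \<longrightarrow> path_vertices (P i) (f i) \<inter> path_vertices (P j) (f j) = {})}"

fun path_weight :: "(int \<Rightarrow> int) \<Rightarrow> int \<times> int \<Rightarrow> step list \<Rightarrow> int poly" where
  "path_weight c a [] = 1"
| "path_weight c a (Asc # ss) = path_weight c (step_move a Asc) ss"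
| "path_weight c a (Flat # ss) = [:0, 1:] * path_weight c (step_move a Flat) ss"
| "path_weight c a (Desc # ss) = [: c (snd a) :] * path_weight c (step_move a Desc) ss"

definition W0 :: "nat \<Rightarrow> (nat \<Rightarrow> step list) \<Rightarrow> int poly" where
  "W0 m f = (\<Prod>i<m. path_weight (\<lambda>y. y + 1) (P i) (f i))"

definition W2 :: "nat \<Rightarrow> (nat \<Rightarrow> step list) \<Rightarrow> int poly" where
  "W2 m f = (\<Prod>i<m. path_weight (\<lambda>y. y - 1) (P i) (f i))"

definition Npoly :: "nat \<Rightarrow> int poly" where
  "Npoly p = (\<Sum>f\<in>families (p + 2). W2 (p + 2) f)"

definition Dpoly :: "nat \<Rightarrow> int poly" where
  "Dpoly p = (\<Sum>f\<in>families p. W0 p f)"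

end

theory Submission
  imports Defs
begin

(* Write m for the number of paths. Path i of a family runs from P_i to some Q_j and satisfies
   #descents + #flats = i, so its weight is an integer times R^(#flats), and a family contributes
   at most R^(0 + 1 + ... + (m-1)). The top power comes only from the family of flat paths, whose
   weight is 1; the constant term comes only from the family of tents, because a flat-free family
   crosses the axis x = 0 at pairwise distinct heights 2a with a <= i, which forces a = i. Every
   power in between is realised by nested trapezoids (the graphs of x |-> min (2i - |x|, 2i - g))
   with positive weight, and no weight is negative. Finally, the tent weights of N_p and D_p are
   products of rising factorials whose quotient is (2p+1)!. *)

lemma sum_inj_endo_lessThan:
  fixes h :: "nat \<Rightarrow> nat"
  assumes "inj_on h {..<m}" "h ` {..<m} \<subseteq> {..<m}"
  shows "(\<Sum>i<m. h i) = (\<Sum>i<m. i)"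
proof -
  have "h ` {..<m} = {..<m}" using endo_inj_surj[OF finite_lessThan assms(2,1)] .
  then show ?thesis using sum.reindex[OF assms(1), of id] by simp
qed

lemma inj_endo_ge_id_lessThan:
  fixes h :: "nat \<Rightarrow> nat"
  assumes "inj_on h {..<m}" "h ` {..<m} \<subseteq> {..<m}" "\<And>i. i < m \<Longrightarrow> i \<le> h i" "i < m"
  shows "h i = i"
  using sum_mono_inv[OF sum_inj_endo_lessThan[OF assms(1,2), symmetric]] assms(3,4) by simp

lemma inj_le_id_lessThan:
  fixes h :: "nat \<Rightarrow> nat"
  assumes "inj_on h {..<m}" "\<And>i. i < m \<Longrightarrow> h i \<le> i" "i < m"
  shows "h i = i"
proof -
  have "h ` {..<m} \<subseteq> {..<m}" using assms(2) by fastforce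
  then show ?thesis using sum_mono_inv[OF sum_inj_endo_lessThan[OF assms(1)]] assms(2,3) by simp
qed

lemma UNIV_step: "(UNIV :: step set) = {Asc, Desc, Flat}"
  using step.exhaust by auto

lemma length_eq_step_counts:
  "length ss = count_list ss Asc + count_list ss Desc + count_list ss Flat"
proof (induction ss)
  case (Cons s ss)
  then show ?case by (cases s) auto
qed simp

lemma count_list_replicate [simp]: "count_list (replicate n s) t = (if s = t then n else 0)"
  by (induction n) auto

lemma eq_replicate_if_count_list_0:
  assumes "\<And>t. t \<noteq> s \<Longrightarrow> count_list ss t = 0"
  shows "ss = replicate (count_list ss s) s"
proof -
  have "\<forall>t\<in>set ss. t = s" using assms by (metis count_list_0_iff)
  then have "ss = replicate (length ss) s" by (simp add: replicate_length_same)
  moreover have "count_list (replicate (length ss) s) s = length ss" by simp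
  ultimately show ?thesis by metis
qed

lemma path_end_eq:
  "path_end (x, y) ss =
     (x + int (count_list ss Asc + count_list ss Desc + 2 * count_list ss Flat),
      y + int (count_list ss Asc) - int (count_list ss Desc))"
proof (induction ss arbitrary: x y)
  case (Cons s ss)
  then show ?case by (cases s) auto
qed simp

lemma path_end_P_eq_Q_iff:
  "path_end (P i) ss = Q j \<longleftrightarrow>
     count_list ss Desc + count_list ss Flat = i \<and> count_list ss Asc + count_list ss Flat = j"
  by (auto simp: path_end_eq P_def Q_def)

lemma path_end_append [simp]: "path_end a (xs @ ys) = path_end (path_end a xs) ys"
  by (induction xs arbitrary: a) auto

lemma start_in_path_vertices: "a \<in> path_vertices a ss"
  by (cases ss) auto

lemma path_vertices_append:
  "path_vertices a (xs @ ys) = path_vertices a xs \<union> path_vertices (path_end a xs) ys"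
  by (induction xs arbitrary: a) (auto simp: start_in_path_vertices)

lemma path_end_in_path_vertices_append: "path_end a xs \<in> path_vertices a (xs @ ys)"
  by (simp add: path_vertices_append start_in_path_vertices)

lemma path_vertices_replicate:
  "path_vertices a (replicate n s) = (\<lambda>k. path_end a (replicate k s)) ` {..n}"
proof (induction n arbitrary: a)
  case (Suc n)
  then show ?case by (simp add: atMost_Suc_eq_insert_0 image_image)
qed simp

lemma flat_free_path_hits_line:
  assumes "count_list ss Flat = 0" "fst a \<le> x" "x \<le> fst (path_end a ss)"
  obtains s1 s2 where "ss = s1 @ s2" "fst (path_end a s1) = x"
  using assms
proof (induction ss arbitrary: a thesis)
  case Nil
  then show ?case by force
next
  case (Cons s ss)
  show ?case
  proof (cases "fst a = x")
    case True
    then show ?thesis using Cons.prems(1)[of "[]" "s # ss"] by simp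
  next
    case False
    have "s \<noteq> Flat" using Cons.prems(2) by auto
    then have "fst (step_move a s) = fst a + 1" by (cases a; cases s) auto
    then obtain s1 s2 where "ss = s1 @ s2" "fst (path_end (step_move a s) s1) = x"
      using Cons.IH[of "step_move a s"] Cons.prems False \<open>s \<noteq> Flat\<close> by auto
    then show ?thesis using Cons.prems(1)[of "s # s1" s2] by simp
  qed
qed

fun descent_weight :: "(int \<Rightarrow> int) \<Rightarrow> int \<times> int \<Rightarrow> step list \<Rightarrow> int" where
  "descent_weight c a [] = 1"
| "descent_weight c a (Desc # ss) = c (snd a) * descent_weight c (step_move a Desc) ss"
| "descent_weight c a (Asc # ss) = descent_weight c (step_move a Asc) ss"
| "descent_weight c a (Flat # ss) = descent_weight c (step_move a Flat) ss"

lemma path_weight_eq_monom: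
  "path_weight c a ss = monom (descent_weight c a ss) (count_list ss Flat)"
proof (induction c a ss rule: path_weight.induct)
  case (3 c a ss)
  have "[:0, 1:] = (monom 1 1 :: int poly)" by (simp add: monom_Suc monom_0 one_pCons)
  with 3 show ?case by (simp add: mult_monom)
qed (simp_all add: monom_0 one_pCons smult_monom)

lemma descent_weight_append:
  "descent_weight c a (xs @ ys) = descent_weight c a xs * descent_weight c (path_end a xs) ys"
  by (induction c a xs rule: descent_weight.induct) auto

lemma descent_weight_replicate_Asc [simp]: "descent_weight c a (replicate n Asc) = 1"
  and descent_weight_replicate_Flat [simp]: "descent_weight c a (replicate n Flat) = 1"
  by (induction n arbitrary: a) auto

lemma descent_weight_replicate_Desc:
  "descent_weight c (x, y) (replicate n Desc) = (\<Prod>s<n. c (y - int s))"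
proof (induction n arbitrary: x y)
  case (Suc n)
  have "descent_weight c (x, y) (replicate (Suc n) Desc) = c y * (\<Prod>s<n. c (y - 1 - int s))"
    using Suc by simp
  also have "\<dots> = (\<Prod>s<Suc n. c (y - int s))"
    by (simp only: prod.lessThan_Suc_shift) (simp add: algebra_simps)
  finally show ?case .
qed simp

lemma descent_weight_nonneg:
  assumes "\<And>y. 1 \<le> y \<Longrightarrow> 0 \<le> c y" and "int (count_list ss Desc) \<le> snd a"
  shows "0 \<le> descent_weight c a ss"
  using assms(2)
proof (induction ss arbitrary: a)
  case (Cons s ss)
  then show ?case using assms(1)[of "snd a"] by (cases a; cases s) auto
qed simp

definition family_flats :: "nat \<Rightarrow> (nat \<Rightarrow> step list) \<Rightarrow> nat" where
  "family_flats m f = (\<Sum>i<m. count_list (f i) Flat)"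

definition family_descent_weight :: "(int \<Rightarrow> int) \<Rightarrow> nat \<Rightarrow> (nat \<Rightarrow> step list) \<Rightarrow> int" where
  "family_descent_weight c m f = (\<Prod>i<m. descent_weight c (P i) (f i))"

definition family_poly :: "(int \<Rightarrow> int) \<Rightarrow> nat \<Rightarrow> int poly" where
  "family_poly c m = (\<Sum>f\<in>families m. \<Prod>i<m. path_weight c (P i) (f i))"

lemma family_weight_eq_monom:
  "(\<Prod>i<m. path_weight c (P i) (f i)) = monom (family_descent_weight c m f) (family_flats m f)"
  by (induction m)
    (simp_all add: family_descent_weight_def family_flats_def path_weight_eq_monom mult_monom
      monom_0 one_pCons)

definition end_index :: "(nat \<Rightarrow> step list) \<Rightarrow> nat \<Rightarrow> nat" where
  "end_index f i = nat (snd (path_end (P i) (f i)))"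

lemma family_path_end:
  assumes "f \<in> families m" "i < m"
  shows "end_index f i < m" "path_end (P i) (f i) = Q (end_index f i)"
proof -
  obtain j where "j < m" "path_end (P i) (f i) = Q j"
    using assms unfolding families_def by blast
  moreover from this have "end_index f i = j" unfolding end_index_def by (simp add: Q_def)
  ultimately show "end_index f i < m" "path_end (P i) (f i) = Q (end_index f i)" by simp_all
qed

lemma family_step_counts:
  assumes "f \<in> families m" "i < m"
  shows "count_list (f i) Desc + count_list (f i) Flat = i"
    "count_list (f i) Asc + count_list (f i) Flat = end_index f i"
  using family_path_end(2)[OF assms] path_end_P_eq_Q_iff by blast+

lemma inj_on_end_index:
  assumes "f \<in> families m"
  shows "inj_on (end_index f) {..<m}"
proof
  fix i j assume "i \<in> {..<m}" "j \<in> {..<m}" "end_index f i = end_index f j"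
  then have "i < m" "j < m" "path_end (P i) (f i) = path_end (P j) (f j)"
    using family_path_end(2)[OF assms] by auto
  then show "i = j" using assms by (auto simp: families_def)
qed

lemma family_nil: "f \<in> families m \<Longrightarrow> m \<le> i \<Longrightarrow> f i = []"
  unfolding families_def by blast

lemma family_vertices_disjoint:
  assumes "f \<in> families m" "i < m" "j < m" "i \<noteq> j"
  shows "path_vertices (P i) (f i) \<inter> path_vertices (P j) (f j) = {}"
  using assms unfolding families_def by blast

lemma finite_families: "finite (families m)"
proof (rule finite_subset)
  let ?L = "{ss :: step list. set ss \<subseteq> UNIV \<and> length ss \<le> 2 * m}"
  show "families m \<subseteq> {f. \<forall>i. (i \<in> {..<m} \<longrightarrow> f i \<in> ?L) \<and> (i \<notin> {..<m} \<longrightarrow> f i = [])}"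
  proof (rule subsetI, rule CollectI, intro allI conjI impI)
    fix f i assume f: "f \<in> families m"
    show "f i \<in> ?L" if "i \<in> {..<m}"
    proof -
      have "i < m" using that by simp
      then have "length (f i) \<le> 2 * m"
        using family_step_counts[OF f, of i] family_path_end(1)[OF f, of i]
        by (simp add: length_eq_step_counts)
      then show ?thesis by simp
    qed
    show "f i = []" if "i \<notin> {..<m}" using that family_nil[OF f] by simp
  qed
  have "finite ?L" by (rule finite_lists_length_le) (simp add: UNIV_step)
  then show "finite {f. \<forall>i. (i \<in> {..<m} \<longrightarrow> f i \<in> ?L) \<and> (i \<notin> {..<m} \<longrightarrow> f i = [])}"
    by (intro finite_set_of_finite_funs) simp_all
qed

lemma family_flats_le:
  assumes "f \<in> families m"
  shows "family_flats m f \<le> (\<Sum>i<m. i)"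
  unfolding family_flats_def by (rule sum_mono) (use family_step_counts(1)[OF assms] in fastforce)

lemma family_descent_weight_nonneg:
  assumes "f \<in> families m" "\<And>y. 1 \<le> y \<Longrightarrow> 0 \<le> c y"
  shows "0 \<le> family_descent_weight c m f"
  unfolding family_descent_weight_def
proof (rule prod_nonneg)
  fix i assume "i \<in> {..<m}"
  then show "0 \<le> descent_weight c (P i) (f i)"
    using family_step_counts(1)[OF assms(1), of i]
    by (intro descent_weight_nonneg assms(2)) (auto simp: P_def)
qed

lemma coeff_family_poly:
  "coeff (family_poly c m) k =
     (\<Sum>f\<in>families m. if family_flats m f = k then family_descent_weight c m f else 0)"
  unfolding family_poly_def family_weight_eq_monom coeff_sum coeff_monom ..

lemma coeff_family_poly_unique:
  assumes "f\<^sub>0 \<in> families m" "family_flats m f\<^sub>0 = k"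
    and "\<And>f. f \<in> families m \<Longrightarrow> family_flats m f = k \<Longrightarrow> f = f\<^sub>0"
  shows "coeff (family_poly c m) k = family_descent_weight c m f\<^sub>0"
proof -
  have "coeff (family_poly c m) k =
      (\<Sum>f\<in>families m. if f = f\<^sub>0 then family_descent_weight c m f\<^sub>0 else 0)"
    unfolding coeff_family_poly
  proof (rule sum.cong)
    fix f assume "f \<in> families m"
    then have "family_flats m f = k \<longleftrightarrow> f = f\<^sub>0" using assms(2,3) by blast
    then show "(if family_flats m f = k then family_descent_weight c m f else 0) =
        (if f = f\<^sub>0 then family_descent_weight c m f\<^sub>0 else 0)"
      by simp
  qed simp
  also have "\<dots> = family_descent_weight c m f\<^sub>0"
    using assms(1) finite_families by (simp add: sum.delta)
  finally show ?thesis .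
qed

definition trapezoid :: "nat \<Rightarrow> nat \<Rightarrow> step list" where
  "trapezoid i g = replicate (i - g) Asc @ replicate g Flat @ replicate (i - g) Desc"

definition trapezoid_family :: "nat \<Rightarrow> (nat \<Rightarrow> nat) \<Rightarrow> nat \<Rightarrow> step list" where
  "trapezoid_family m g i = (if i < m then trapezoid i (g i) else [])"

lemma path_end_trapezoid: "g \<le> i \<Longrightarrow> path_end (P i) (trapezoid i g) = Q i"
  unfolding path_end_P_eq_Q_iff by (simp add: trapezoid_def)

lemma count_list_trapezoid_Flat: "count_list (trapezoid i g) Flat = g"
  by (simp add: trapezoid_def)

lemma trapezoid_vertex_height:
  assumes "g \<le> i" "(x, y) \<in> path_vertices (P i) (trapezoid i g)"
  shows "y = min (2 * int i - \<bar>x\<bar>) (2 * int i - int g)"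
  using assms
  by (auto simp: trapezoid_def path_vertices_append path_vertices_replicate path_end_eq P_def
      of_nat_diff)

lemma descent_weight_trapezoid:
  assumes "g \<le> i"
  shows "descent_weight c (P i) (trapezoid i g) = (\<Prod>s<i - g. c (int i + 1 + int s))"
proof -
  have "descent_weight c (P i) (trapezoid i g) = (\<Prod>s<i - g. c (2 * int i - int g - int s))"
    using assms
    by (simp add: trapezoid_def descent_weight_append descent_weight_replicate_Desc path_end_eq
        P_def of_nat_diff)
  also have "\<dots> = (\<Prod>s<i - g. c (int i + 1 + int (i - g - Suc s)))"
    by (rule prod.cong) (auto simp: of_nat_diff algebra_simps)
  also have "\<dots> = (\<Prod>s<i - g. c (int i + 1 + int s))"
    by (rule prod.nat_diff_reindex)
  finally show ?thesis .
qed

lemma trapezoid_family_in_families: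
  assumes "\<And>i. i < m \<Longrightarrow> g i \<le> i"
    and "\<And>i j. i < j \<Longrightarrow> j < m \<Longrightarrow> g j < g i + 2 * (j - i)"
  shows "trapezoid_family m g \<in> families m"
proof -
  let ?f = "trapezoid_family m g"
  have ends: "path_end (P i) (?f i) = Q i" if "i < m" for i
    using that assms(1) by (simp add: trapezoid_family_def path_end_trapezoid)
  have disjoint: "path_vertices (P i) (?f i) \<inter> path_vertices (P j) (?f j) = {}"
    if ij: "i < j" "j < m" for i j
  proof (rule ccontr)
    assume "path_vertices (P i) (?f i) \<inter> path_vertices (P j) (?f j) \<noteq> {}"
    then obtain x y where "(x, y) \<in> path_vertices (P i) (trapezoid i (g i))"
      "(x, y) \<in> path_vertices (P j) (trapezoid j (g j))"
      using ij by (auto simp: trapezoid_family_def)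
    then have "y = min (2 * int i - \<bar>x\<bar>) (2 * int i - int (g i))"
      "y = min (2 * int j - \<bar>x\<bar>) (2 * int j - int (g j))"
      using ij assms(1) by (auto intro: trapezoid_vertex_height)
    moreover have "int (g j) < int (g i) + 2 * (int j - int i)"
      using assms(2)[OF ij] ij by (simp add: of_nat_diff)
    ultimately show False using ij by (auto simp: min_def split: if_splits)
  qed
  show ?thesis unfolding families_def
  proof (intro CollectI conjI allI impI)
    fix i j assume "i < m" "j < m" "i \<noteq> j"
    then show "path_vertices (P i) (?f i) \<inter> path_vertices (P j) (?f j) = {}"
      using disjoint by (metis Int_commute linorder_neqE_nat)
  qed (use ends in \<open>auto simp: trapezoid_family_def Q_def\<close>)
qed

lemma family_flats_trapezoid_family: "family_flats m (trapezoid_family m g) = (\<Sum>i<m. g i)"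
  unfolding family_flats_def by (rule sum.cong) (simp_all add: trapezoid_family_def count_list_trapezoid_Flat)

lemma family_descent_weight_trapezoid_family:
  "(\<And>i. i < m \<Longrightarrow> g i \<le> i) \<Longrightarrow>
    family_descent_weight c m (trapezoid_family m g) = (\<Prod>i<m. \<Prod>s<i - g i. c (int i + 1 + int s))"
  unfolding family_descent_weight_def
  by (rule prod.cong) (simp_all add: trapezoid_family_def descent_weight_trapezoid)

lemma family_flats_eq_max:
  assumes f: "f \<in> families m" and flats: "family_flats m f = (\<Sum>i<m. i)"
  shows "f = trapezoid_family m id"
proof
  fix i
  have all_flat: "count_list (f k) Flat = k" if "k < m" for k
    using sum_mono_inv[OF flats[unfolded family_flats_def]] family_step_counts(1)[OF f] that
    by fastforce
  have "end_index f k = k" if "k < m" for k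
  proof (rule inj_endo_ge_id_lessThan[OF inj_on_end_index[OF f] _ _ that])
    show "end_index f ` {..<m} \<subseteq> {..<m}" using family_path_end(1)[OF f] by auto
    show "k \<le> end_index f k" if "k < m" for k
      using family_step_counts(2)[OF f that] all_flat[OF that] by simp
  qed
  then have "count_list (f k) Asc = 0" "count_list (f k) Desc = 0" if "k < m" for k
    using family_step_counts[OF f that] all_flat[OF that] that by auto
  then have "f k = replicate k Flat" if "k < m" for k
    using eq_replicate_if_count_list_0[of Flat "f k"] all_flat[OF that] that
    by (metis step.exhaust)
  then show "f i = trapezoid_family m id i"
    using family_nil[OF f] by (simp add: trapezoid_family_def trapezoid_def)
qed

lemma flat_free_path_crosses_axis:
  assumes flat: "count_list ss Flat = 0" and ends: "path_end (P i) ss = Q j"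
  obtains a where "a \<le> i" "a \<le> j" "(0, 2 * int a) \<in> path_vertices (P i) ss"
    "a = i \<Longrightarrow> a = j \<Longrightarrow> ss = trapezoid i 0"
proof -
  obtain s1 s2 where ss: "ss = s1 @ s2" and axis: "fst (path_end (P i) s1) = 0"
    using flat_free_path_hits_line[OF flat, of "P i" 0] ends by (auto simp: P_def Q_def)
  define a where "a = count_list s1 Asc"
  have flat12: "count_list s1 Flat = 0" "count_list s2 Flat = 0" using flat ss by auto
  then have s1: "count_list s1 Desc = i - a" "a \<le> i" and v: "path_end (P i) s1 = (0, 2 * int a)"
    using axis by (auto simp: path_end_eq P_def a_def)
  have "path_end (0, 2 * int a) s2 = Q j" using ends ss v by simp
  then have s2: "count_list s2 Desc = a" "count_list s2 Asc = j - a" "a \<le> j"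
    using flat12 by (auto simp: path_end_eq Q_def)
  have "(0, 2 * int a) \<in> path_vertices (P i) ss"
    using ss v path_end_in_path_vertices_append by metis
  moreover have "ss = trapezoid i 0" if "a = i" "a = j"
  proof -
    have "s1 = replicate i Asc"
      using eq_replicate_if_count_list_0[of Asc s1] s1 flat12 that
      by (metis a_def diff_self_eq_0 step.exhaust)
    moreover have "s2 = replicate i Desc"
      using eq_replicate_if_count_list_0[of Desc s2] s2 flat12 that
      by (metis diff_self_eq_0 step.exhaust)
    ultimately show ?thesis by (simp add: ss trapezoid_def)
  qed
  ultimately show ?thesis using that s1(2) s2(3) by blast
qed

text \<open>A flat-free family meets the axis x = 0 at distinct even heights 2 h i with h i \<le> i,
  so h is the identity; hence every path reaches height 2 i on the axis and must be a tent.\<close>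
lemma family_flats_eq_0:
  assumes f: "f \<in> families m" and flats: "family_flats m f = 0"
  shows "f = trapezoid_family m (\<lambda>_. 0)"
proof -
  have "\<forall>i\<in>{..<m}. \<exists>a. a \<le> i \<and> a \<le> end_index f i \<and> (0, 2 * int a) \<in> path_vertices (P i) (f i)
      \<and> (a = i \<longrightarrow> a = end_index f i \<longrightarrow> f i = trapezoid i 0)"
  proof
    fix i assume "i \<in> {..<m}"
    then have "count_list (f i) Flat = 0" "path_end (P i) (f i) = Q (end_index f i)"
      using flats family_path_end(2)[OF f] by (auto simp: family_flats_def)
    then obtain a where "a \<le> i" "a \<le> end_index f i" "(0, 2 * int a) \<in> path_vertices (P i) (f i)"
      "a = i \<Longrightarrow> a = end_index f i \<Longrightarrow> f i = trapezoid i 0"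
      by (metis flat_free_path_crosses_axis)
    then show "\<exists>a. a \<le> i \<and> a \<le> end_index f i \<and> (0, 2 * int a) \<in> path_vertices (P i) (f i)
      \<and> (a = i \<longrightarrow> a = end_index f i \<longrightarrow> f i = trapezoid i 0)"
      by auto
  qed
  then obtain h where h: "\<And>i. i < m \<Longrightarrow> h i \<le> i \<and> h i \<le> end_index f i
      \<and> (0, 2 * int (h i)) \<in> path_vertices (P i) (f i)
      \<and> (h i = i \<longrightarrow> h i = end_index f i \<longrightarrow> f i = trapezoid i 0)"
    by (metis lessThan_iff)
  have "inj_on h {..<m}"
  proof
    fix i j assume "i \<in> {..<m}" "j \<in> {..<m}" "h i = h j"
    then show "i = j" using h family_vertices_disjoint[OF f] by (metis disjoint_iff lessThan_iff)
  qed
  then have h_id: "h i = i" if "i < m" for i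
    using inj_le_id_lessThan h that by blast
  have "end_index f i = i" if "i < m" for i
  proof (rule inj_endo_ge_id_lessThan[OF inj_on_end_index[OF f] _ _ that])
    show "end_index f ` {..<m} \<subseteq> {..<m}" using family_path_end(1)[OF f] by auto
    show "k \<le> end_index f k" if "k < m" for k using h[OF that] h_id[OF that] by simp
  qed
  then have "f i = trapezoid i 0" if "i < m" for i using h[OF that] h_id[OF that] that by simp
  then show ?thesis using family_nil[OF f] by (auto simp: trapezoid_family_def)
qed

definition staircase :: "nat \<Rightarrow> nat \<Rightarrow> nat \<Rightarrow> nat" where
  "staircase r v i = (if i < r then i else if i = r then v else 0)"

lemma staircase_le: "v \<le> r \<Longrightarrow> staircase r v i \<le> i"
  by (simp add: staircase_def)

lemma staircase_gap: "v \<le> r \<Longrightarrow> i < j \<Longrightarrow> staircase r v j < staircase r v i + 2 * (j - i)"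
  by (auto simp: staircase_def)

lemma sum_staircase: "r < m \<Longrightarrow> (\<Sum>i<m. staircase r v i) = (\<Sum>i<r. i) + v"
proof (induction m)
  case (Suc m)
  show ?case
  proof (cases "m = r")
    case True
    have "(\<Sum>i<r. staircase r v i) = (\<Sum>i<r. i)" by (rule sum.cong) (simp_all add: staircase_def)
    with True show ?thesis by (simp add: staircase_def)
  next
    case False
    with Suc show ?thesis by (simp add: staircase_def)
  qed
qed simp

lemma triangular_decomposition:
  "0 < m \<Longrightarrow> k \<le> (\<Sum>i<m. i) \<Longrightarrow> \<exists>r<m. \<exists>v\<le>r. k = (\<Sum>i<r. i) + (v :: nat)"
proof (induction m)
  case (Suc m)
  show ?case
  proof (cases "0 < m \<and> k \<le> (\<Sum>i<m. i)")
    case True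
    then show ?thesis using Suc.IH less_SucI by blast
  next
    case False
    with Suc.prems have "k = (\<Sum>i<m. i) + (k - (\<Sum>i<m. i))" "k - (\<Sum>i<m. i) \<le> m"
      by auto
    then show ?thesis by blast
  qed
qed simp

lemma exists_staircase_sum:
  assumes "k \<le> (\<Sum>i<m. i)"
  obtains r v where "v \<le> r" "(\<Sum>i<m. staircase r v i) = k"
proof (cases "m = 0")
  case True
  then show ?thesis using assms that[of 0 0] by simp
next
  case False
  then obtain r v where "r < m" "v \<le> r" "k = (\<Sum>i<r. i) + v"
    using triangular_decomposition assms by blast
  then show ?thesis using that sum_staircase by metis
qed

lemma coeff_family_poly_eq_0:
  assumes "(\<Sum>i<m. i) < k"
  shows "coeff (family_poly c m) k = 0"
  unfolding coeff_family_poly using family_flats_le assms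
  by (intro sum.neutral) (metis not_le)

lemma coeff_family_poly_max: "coeff (family_poly c m) (\<Sum>i<m. i) = 1"
proof -
  have "coeff (family_poly c m) (\<Sum>i<m. i) = family_descent_weight c m (trapezoid_family m id)"
    by (rule coeff_family_poly_unique)
      (simp_all add: trapezoid_family_in_families family_flats_trapezoid_family family_flats_eq_max)
  then show ?thesis by (simp add: family_descent_weight_trapezoid_family)
qed

lemma degree_family_poly: "degree (family_poly c m) = (\<Sum>i<m. i)"
proof (rule antisym)
  show "degree (family_poly c m) \<le> (\<Sum>i<m. i)"
    by (rule degree_le) (simp add: coeff_family_poly_eq_0)
  show "(\<Sum>i<m. i) \<le> degree (family_poly c m)"
    by (rule le_degree) (simp add: coeff_family_poly_max)
qed

lemma lead_coeff_family_poly: "lead_coeff (family_poly c m) = 1"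
  by (simp add: degree_family_poly coeff_family_poly_max)

lemma coeff_0_family_poly:
  "coeff (family_poly c m) 0 = (\<Prod>i<m. \<Prod>s<i. c (int i + 1 + int s))"
proof -
  have "coeff (family_poly c m) 0 = family_descent_weight c m (trapezoid_family m (\<lambda>_. 0))"
    by (rule coeff_family_poly_unique)
      (simp_all add: trapezoid_family_in_families family_flats_trapezoid_family family_flats_eq_0)
  then show ?thesis by (simp add: family_descent_weight_trapezoid_family)
qed

lemma coeff_family_poly_pos:
  assumes nonneg: "\<And>y. 1 \<le> y \<Longrightarrow> 0 \<le> c y" and pos: "\<And>y. 2 \<le> y \<Longrightarrow> 0 < c y"
    and k: "k \<le> (\<Sum>i<m. i)"
  shows "0 < coeff (family_poly c m) k"
proof -
  obtain r v where rv: "v \<le> r" "(\<Sum>i<m. staircase r v i) = k"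
    using exists_staircase_sum[OF k] .
  let ?f = "trapezoid_family m (staircase r v)"
  have f: "?f \<in> families m"
    using rv(1) by (simp add: trapezoid_family_in_families staircase_le staircase_gap)
  have "family_flats m ?f = k"
    using rv(2) by (simp add: family_flats_trapezoid_family)
  moreover have "0 < family_descent_weight c m ?f"
    using rv(1) by (auto simp: family_descent_weight_trapezoid_family staircase_le intro!: prod_pos pos)
  ultimately have "0 < (if family_flats m ?f = k then family_descent_weight c m ?f else 0)"
    by simp
  also have "\<dots> \<le> coeff (family_poly c m) k"
    unfolding coeff_family_poly
    by (rule member_le_sum) (use f finite_families family_descent_weight_nonneg nonneg in auto)
  finally show ?thesis .
qed

lemma prod_pochhammer_identity:
  "(\<Prod>i<p + 2. pochhammer (int i) i) = fact (2 * p + 1) * (\<Prod>i<p. pochhammer (int i + 2) i)"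
proof (induction p)
  case 0
  then show ?case by (simp add: numeral_2_eq_2)
next
  case (Suc p)
  have last: "pochhammer (int (p + 2)) (p + 2) =
      pochhammer (int p + 2) p * ((2 * int p + 2) * (2 * int p + 3))"
    using pochhammer_product'[of "int p + 2" p 2]
    by (simp add: numeral_2_eq_2 pochhammer_rec' algebra_simps)
  have fact: "fact (2 * Suc p + 1) = (2 * int p + 2) * (2 * int p + 3) * (fact (2 * p + 1) :: int)"
    by (simp add: numeral_2_eq_2 fact_Suc algebra_simps)
  have "(\<Prod>i<Suc p + 2. pochhammer (int i) i) =
      (\<Prod>i<p + 2. pochhammer (int i) i) * pochhammer (int (p + 2)) (p + 2)"
    by (simp only: add_Suc prod.lessThan_Suc)
  then show ?case
    unfolding Suc.IH last fact prod.lessThan_Suc by (simp only: mult_ac)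
qed

theorem theorem6p3:
  fixes p :: nat
  defines "n \<equiv> 2 * p + 1"
  shows "lead_coeff (Npoly p) = 1
       \<and> degree (Npoly p) = (p + 1) * (p + 2) div 2
       \<and> (\<forall>i \<le> (p + 1) * (p + 2) div 2. coeff (Npoly p) i > 0)
       \<and> lead_coeff (Dpoly p) = 1
       \<and> degree (Dpoly p) = p * (p - 1) div 2
       \<and> (\<forall>i \<le> p * (p - 1) div 2. coeff (Dpoly p) i > 0)
       \<and> poly (Npoly p) 0 = int (fact n) * poly (Dpoly p) 0"
proof -
  have N: "Npoly p = family_poly (\<lambda>y. y - 1) (p + 2)"
    by (simp add: Npoly_def W2_def family_poly_def)
  have D: "Dpoly p = family_poly (\<lambda>y. y + 1) p"
    by (simp add: Dpoly_def W0_def family_poly_def)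
  have sum_N: "(\<Sum>i<p + 2. i) = (p + 1) * (p + 2) div 2"
    using gauss_sum_nat[of "p + 1"] by (simp add: lessThan_Suc_atMost atLeast0AtMost)
  have sum_D: "(\<Sum>i<p. i) = p * (p - 1) div 2"
    using gauss_sum_nat[of "p - 1"] by (cases p) (simp_all add: lessThan_Suc_atMost atLeast0AtMost)
  have "lead_coeff (Npoly p) = 1 \<and> degree (Npoly p) = (\<Sum>i<p + 2. i)
      \<and> (\<forall>k \<le> (\<Sum>i<p + 2. i). coeff (Npoly p) k > 0)"
    unfolding N
    by (intro conjI allI impI lead_coeff_family_poly degree_family_poly coeff_family_poly_pos) auto
  moreover have "lead_coeff (Dpoly p) = 1 \<and> degree (Dpoly p) = (\<Sum>i<p. i)
      \<and> (\<forall>k \<le> (\<Sum>i<p. i). coeff (Dpoly p) k > 0)"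
    unfolding D
    by (intro conjI allI impI lead_coeff_family_poly degree_family_poly coeff_family_poly_pos) auto
  moreover have "poly (Npoly p) 0 = int (fact n) * poly (Dpoly p) 0"
  proof -
    have "poly (Npoly p) 0 = (\<Prod>i<p + 2. pochhammer (int i) i)"
      by (simp add: N poly_0_coeff_0 coeff_0_family_poly pochhammer_prod atLeast0LessThan)
    also have "\<dots> = int (fact n) * (\<Prod>i<p. pochhammer (int i + 2) i)"
      unfolding n_def of_nat_fact by (rule prod_pochhammer_identity)
    also have "\<dots> = int (fact n) * poly (Dpoly p) 0"
      by (simp add: D poly_0_coeff_0 coeff_0_family_poly pochhammer_prod atLeast0LessThan
          algebra_simps)
    finally show ?thesis .
  qed
  ultimately show ?thesis unfolding sum_N sum_D by blast
qed

end
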